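(* Let $p\ge 2$, $w\in\mathbb{R}$, $z\in\mathbb{R}^{p-1}$, $\lambda_2\ge 0$ and $\lambda_1>0$. Then the optimization problem \[ \min_{\beta^+\in\mathbb{R},\,\beta^-\in\mathbb{R},\,\theta\in\mathbb{R}^{p-1}}\ \frac12\bigl(w-(\beta^+-\beta^-)\bigr)^2+\frac12\|z-\theta\|_2^2+\lambda_1(\beta^++\beta^-)+\lambda_2\|\theta\|_1 \] subject to $\beta^+\ge 0$, $\beta^-\ge 0$, $\|\theta\|_1\le \beta^++\beta^-$, has a unique solution $(\hat\beta^+,\hat\beta^-,\hat\theta)$.
   Context: $\|\cdot\|_1$ and $\|\cdot\|_2$ denote the $\ell_1$ and Euclidean norms on $\mathbb{R}^{p-1}$. The tuning parameters $\lambda_1,\lambda_2$ are nonnegative. *)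

theory Defs
  imports "HOL-Analysis.Analysis"
begin

definition l1norm :: "real ^ 'n \<Rightarrow> real" where
  "l1norm x = (\<Sum>i\<in>UNIV. \<bar>x $ i\<bar>)"

definition objective :: "real \<Rightarrow> real ^ 'n \<Rightarrow> real \<Rightarrow> real \<Rightarrow> real \<Rightarrow> real \<Rightarrow> real ^ 'n \<Rightarrow> real" where
  "objective w z lam1 lam2 bp bm \<theta> =
     (1/2) * (w - (bp - bm))^2 + (1/2) * (norm (z - \<theta>))^2 + lam1 * (bp + bm) + lam2 * l1norm \<theta>"

definition feasible :: "real \<Rightarrow> real \<Rightarrow> real ^ 'n \<Rightarrow> bool" where
  "feasible bp bm \<theta> \<longleftrightarrow> bp \<ge> 0 \<and> bm \<ge> 0 \<and> l1norm \<theta> \<le> bp + bm"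

end

theory Submission
  imports Defs
begin

text \<open>Existence: the objective is continuous and dominates \<open>lam1 (bp + bm)\<close>, which on the
feasible set also bounds \<open>\<bar>bp\<bar>\<close>, \<open>\<bar>bm\<bar>\<close> and \<open>\<parallel>\<theta>\<parallel> \<le> l1norm \<theta>\<close>; so a sublevel set is compact and
a minimiser exists. Uniqueness: at the midpoint of two minimisers the objective drops by
\<open>((bp - bm) - (bp' - bm'))\<^sup>2/8 + \<parallel>\<theta> - \<theta>'\<parallel>\<^sup>2/8\<close>, so the minimisers agree in \<open>bp - bm\<close> and \<open>\<theta>\<close>;
the remaining term \<open>lam1 (bp + bm)\<close> with \<open>lam1 > 0\<close> then fixes \<open>bp + bm\<close> as well.\<close>

lemma continuous_attains_inf_sublevel:
  fixes f :: "'a::heine_borel \<Rightarrow> real"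
  assumes "closed S" "continuous_on S f" "x0 \<in> S" "bounded {x \<in> S. f x \<le> f x0}"
  shows "\<exists>x\<in>S. \<forall>y\<in>S. f x \<le> f y"
proof -
  let ?K = "{x \<in> S. f x \<le> f x0}"
  have "?K = S \<inter> f -` {..f x0}" by auto
  then have "closed ?K"
    using continuous_closed_preimage[OF assms(2,1) closed_atMost] by simp
  with assms(4) have "compact ?K" by (simp add: compact_eq_bounded_closed)
  moreover have "continuous_on ?K f" using assms(2) by (rule continuous_on_subset) auto
  ultimately obtain x where "x \<in> ?K" "\<forall>y\<in>?K. f x \<le> f y"
    using continuous_attains_inf[of ?K f] assms(3) by blast
  then show ?thesis by force
qed

lemma norm_diff_midpoint_squared:
  fixes z a b :: "'a::real_inner"
  shows "(norm (z - (1/2) *\<^sub>R (a + b)))\<^sup>2 =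
    ((norm (z - a))\<^sup>2 + (norm (z - b))\<^sup>2) / 2 - (norm (a - b))\<^sup>2 / 4"
  by (simp add: power2_norm_eq_inner inner_diff_left inner_diff_right inner_add_left
      inner_add_right inner_commute algebra_simps) (simp add: field_simps)

lemma l1norm_nonneg: "l1norm x \<ge> 0"
  unfolding l1norm_def by (simp add: sum_nonneg)

lemma norm_le_l1norm: "norm x \<le> l1norm x"
  unfolding l1norm_def by (rule norm_le_l1_cart)

lemma l1norm_midpoint_le: "l1norm ((1/2) *\<^sub>R (a + b)) \<le> (l1norm a + l1norm b) / 2"
proof -
  have "l1norm ((1/2) *\<^sub>R (a + b)) = (\<Sum>i\<in>UNIV. \<bar>a $ i + b $ i\<bar> / 2)"
    unfolding l1norm_def by (simp add: abs_mult)
  also have "\<dots> \<le> (\<Sum>i\<in>UNIV. (\<bar>a $ i\<bar> + \<bar>b $ i\<bar>) / 2)"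
    by (rule sum_mono) (simp add: divide_right_mono abs_triangle_ineq)
  also have "\<dots> = (l1norm a + l1norm b) / 2"
    unfolding l1norm_def by (simp add: sum.distrib sum_divide_distrib[symmetric])
  finally show ?thesis .
qed

lemma continuous_on_l1norm [continuous_intros]:
  "continuous_on A f \<Longrightarrow> continuous_on A (\<lambda>x. l1norm (f x))"
  unfolding l1norm_def by (intro continuous_intros)

definition feasible_set :: "(real \<times> real \<times> (real ^ 'n)) set" where
  "feasible_set = {(bp, bm, \<theta>). feasible bp bm \<theta>}"

lemma closed_feasible_set: "closed feasible_set"
proof -
  have "feasible_set = {p. 0 \<le> fst p} \<inter> {p. 0 \<le> fst (snd p)} \<inter>
      {p. l1norm (snd (snd p)) \<le> fst p + fst (snd p)}"
    unfolding feasible_set_def feasible_def by auto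
  also have "closed \<dots>"
    by (intro closed_Int closed_Collect_le continuous_intros)
  finally show ?thesis .
qed

lemma feasible_midpoint:
  assumes "feasible bp bm \<theta>" "feasible bp' bm' \<theta>'"
  shows "feasible ((bp + bp') / 2) ((bm + bm') / 2) ((1/2) *\<^sub>R (\<theta> + \<theta>'))"
  using assms l1norm_midpoint_le[of \<theta> \<theta>'] unfolding feasible_def by (auto simp: field_simps)

lemma objective_ge_penalty:
  assumes "lam2 \<ge> 0"
  shows "lam1 * (bp + bm) \<le> objective w z lam1 lam2 bp bm \<theta>"
  using assms l1norm_nonneg[of \<theta>] unfolding objective_def by simp

lemma objective_midpoint_le:
  assumes "lam2 \<ge> 0"
  shows "objective w z lam1 lam2 ((bp + bp') / 2) ((bm + bm') / 2) ((1/2) *\<^sub>R (\<theta> + \<theta>'))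
    \<le> (objective w z lam1 lam2 bp bm \<theta> + objective w z lam1 lam2 bp' bm' \<theta>') / 2
       - ((bp - bm) - (bp' - bm'))\<^sup>2 / 8 - (norm (\<theta> - \<theta>'))\<^sup>2 / 8"
proof -
  have fit: "(w - ((bp + bp') / 2 - (bm + bm') / 2))\<^sup>2 =
      ((w - (bp - bm))\<^sup>2 + (w - (bp' - bm'))\<^sup>2) / 2 - ((bp - bm) - (bp' - bm'))\<^sup>2 / 4"
    by (simp add: power2_eq_square field_simps)
  have "lam2 * l1norm ((1/2) *\<^sub>R (\<theta> + \<theta>')) \<le> lam2 * ((l1norm \<theta> + l1norm \<theta>') / 2)"
    using assms l1norm_midpoint_le by (rule mult_left_mono[rotated])
  then show ?thesis
    unfolding objective_def using fit norm_diff_midpoint_squared[of z \<theta> \<theta>']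
    by (simp add: field_simps)
qed

definition is_minimiser :: "real \<Rightarrow> real ^ 'n \<Rightarrow> real \<Rightarrow> real \<Rightarrow> real \<Rightarrow> real \<Rightarrow> real ^ 'n \<Rightarrow> bool"
  where "is_minimiser w z lam1 lam2 bp bm \<theta> \<longleftrightarrow> feasible bp bm \<theta> \<and>
    (\<forall>bp' bm' \<theta>'. feasible bp' bm' \<theta>' \<longrightarrow>
       objective w z lam1 lam2 bp bm \<theta> \<le> objective w z lam1 lam2 bp' bm' \<theta>')"

lemma objective_has_minimiser:
  fixes z :: "real ^ 'n"
  assumes "lam2 \<ge> 0" "lam1 > 0"
  shows "\<exists>bp bm \<theta>. is_minimiser w z lam1 lam2 bp bm \<theta>"
proof -
  define F :: "real \<times> real \<times> (real ^ 'n) \<Rightarrow> real"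
    where "F = (\<lambda>(bp, bm, \<theta>). objective w z lam1 lam2 bp bm \<theta>)"
  have "\<exists>p\<in>feasible_set. \<forall>q\<in>feasible_set. F p \<le> F q"
  proof (rule continuous_attains_inf_sublevel)
    show "closed (feasible_set :: (real \<times> real \<times> (real ^ 'n)) set)"
      by (rule closed_feasible_set)
    show "continuous_on feasible_set F"
      unfolding F_def objective_def by (auto simp: split_def intro!: continuous_intros)
    show "(0, 0, 0) \<in> feasible_set"
      unfolding feasible_set_def feasible_def by (simp add: l1norm_def)
    have "norm p \<le> 3 * (F (0, 0, 0) / lam1)"
      if "p \<in> feasible_set" "F p \<le> F (0, 0, 0)" for p
    proof -
      obtain bp bm \<theta> where p: "p = (bp, bm, \<theta>)" by (cases p)
      have f: "bp \<ge> 0" "bm \<ge> 0" "l1norm \<theta> \<le> bp + bm"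
        using that(1) unfolding p feasible_set_def feasible_def by auto
      have "lam1 * (bp + bm) \<le> F (0, 0, 0)"
        using objective_ge_penalty[OF assms(1), of lam1 bp bm w z \<theta>] that(2)
        unfolding p F_def by simp
      then have s: "bp + bm \<le> F (0, 0, 0) / lam1" using assms(2) by (simp add: field_simps)
      have "norm p \<le> norm bp + (norm bm + norm \<theta>)"
        unfolding p using norm_Pair_le[of bp "(bm, \<theta>)"] norm_Pair_le[of bm \<theta>] by linarith
      also have "\<dots> \<le> 3 * (F (0, 0, 0) / lam1)"
        using f s norm_le_l1norm[of \<theta>] by simp
      finally show ?thesis .
    qed
    then show "bounded {p \<in> feasible_set. F p \<le> F (0, 0, 0)}"
      unfolding bounded_iff by blast
  qed
  then show ?thesis
    unfolding is_minimiser_def feasible_set_def F_def by fastforce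
qed

lemma is_minimiser_unique:
  assumes "lam2 \<ge> 0" "lam1 > 0"
    and "is_minimiser w z lam1 lam2 bp bm \<theta>" "is_minimiser w z lam1 lam2 bp' bm' \<theta>'"
  shows "bp = bp' \<and> bm = bm' \<and> \<theta> = \<theta>'"
proof -
  let ?Ob = "objective w z lam1 lam2"
  have f: "feasible bp bm \<theta>" "feasible bp' bm' \<theta>'"
    using assms(3,4) unfolding is_minimiser_def by auto
  have eq: "?Ob bp bm \<theta> = ?Ob bp' bm' \<theta>'"
    using assms(3,4) f unfolding is_minimiser_def by (meson order_antisym)
  have "?Ob bp bm \<theta> \<le> ?Ob ((bp + bp') / 2) ((bm + bm') / 2) ((1/2) *\<^sub>R (\<theta> + \<theta>'))"
    using assms(3) feasible_midpoint[OF f] unfolding is_minimiser_def by blast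
  then have "((bp - bm) - (bp' - bm'))\<^sup>2 / 8 + (norm (\<theta> - \<theta>'))\<^sup>2 / 8 \<le> 0"
    using objective_midpoint_le[OF assms(1), of w z lam1 bp bp' bm bm' \<theta> \<theta>'] eq by argo
  then have "((bp - bm) - (bp' - bm'))\<^sup>2 = 0" "(norm (\<theta> - \<theta>'))\<^sup>2 = 0"
    using zero_le_power2[of "(bp - bm) - (bp' - bm')"] zero_le_power2[of "norm (\<theta> - \<theta>')"]
    by linarith+
  then have diff: "bp - bm = bp' - bm'" and \<theta>: "\<theta> = \<theta>'" by simp_all
  with eq have "lam1 * (bp + bm) = lam1 * (bp' + bm')"
    unfolding objective_def by simp
  with assms(2) diff \<theta> show ?thesis by auto
qed

theorem lemma1:
  fixes w :: real and z :: "real ^ 'n" and lam1 lam2 :: real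
  assumes "lam2 \<ge> 0" and "lam1 > 0"
  shows "\<exists>!(bp, bm, \<theta>). feasible bp bm \<theta> \<and>
           (\<forall>bp' bm' \<theta>'. feasible bp' bm' \<theta>' \<longrightarrow>
              objective w z lam1 lam2 bp bm \<theta> \<le> objective w z lam1 lam2 bp' bm' \<theta>')"
proof -
  obtain bp bm \<theta> where min: "is_minimiser w z lam1 lam2 bp bm \<theta>"
    using objective_has_minimiser[OF assms] by blast
  have "\<exists>!(bp, bm, \<theta>). is_minimiser w z lam1 lam2 bp bm \<theta>"
  proof (rule ex1I[of _ "(bp, bm, \<theta>)"])
    show "case (bp, bm, \<theta>) of (bp, bm, \<theta>) \<Rightarrow> is_minimiser w z lam1 lam2 bp bm \<theta>"
      using min by simp
    fix p
    assume "case p of (bp', bm', \<theta>') \<Rightarrow> is_minimiser w z lam1 lam2 bp' bm' \<theta>'"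
    then show "p = (bp, bm, \<theta>)"
      using is_minimiser_unique[OF assms _ min] by (cases p) auto
  qed
  then show ?thesis unfolding is_minimiser_def .
qed

end
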